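(* Let $p$ be a prime, $m\ge 2$, $G$ an elementary abelian $p$-group of rank $m$, $J$ the Jacobson radical of $\mathbb{F}_pG$, and $N=m(p-1)$. Then for $0<r<N$ the ideal $J^r$ is not a principal ideal of $\mathbb{F}_pG$, while $J^N=\mathbb{F}_p\sum_{g\in G}g$ is principal. Consequently, for $0\le i\le N$, the ideal $J^i$ is checkable in $\mathbb{F}_pG$ if and only if $i\in\{0,1\}$. (Equivalently, with $\mathrm{RM}_p(r,m)=J^{N-r}$ the Reed–Muller code of order $r$ and length $p^m$ over $\mathbb{F}_p$, $0\le r\le N$, the only checkable Reed–Muller codes are $\mathrm{RM}_p(N,m)=\mathbb{F}_pG$ and $\mathrm{RM}_p(N-1,m)=J$.)
   Context: A right ideal $I$ of a group algebra $KG$ is called checkable if there is $v\in KG$ with $I=\{a\in KG: va=0\}$. Here $\mathbb{F}_pG$ is commutative, so right ideals are ideals. *)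

theory Defs
  imports "HOL-Computational_Algebra.Primes" "HOL-Algebra.Ideal_Product"
begin

definition group_algebra :: "('g, 'c) monoid_scheme \<Rightarrow> ('g \<Rightarrow> 'k::field) ring" where
  "group_algebra G =
     \<lparr> carrier = {f. \<forall>x. x \<notin> carrier G \<longrightarrow> f x = 0},
       mult = (\<lambda>a b g. if g \<in> carrier G
                        then (\<Sum>h\<in>carrier G. a h * b (inv\<^bsub>G\<^esub> h \<otimes>\<^bsub>G\<^esub> g)) else 0),
       one = (\<lambda>g. if g = \<one>\<^bsub>G\<^esub> then 1 else 0),
       zero = (\<lambda>_. 0),
       add = (\<lambda>a b g. a g + b g) \<rparr>"

definition jacobson_radical :: "('a, 'b) ring_scheme \<Rightarrow> 'a set" where
  "jacobson_radical R = \<Inter>{I. maximalideal I R}"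

primrec ideal_pow :: "('a, 'b) ring_scheme \<Rightarrow> 'a set \<Rightarrow> nat \<Rightarrow> 'a set" where
  "ideal_pow R I 0 = carrier R"
| "ideal_pow R I (Suc n) = ideal_prod R I (ideal_pow R I n)"

definition checkable :: "'a set \<Rightarrow> ('a, 'b) ring_scheme \<Rightarrow> bool" where
  "checkable I R \<longleftrightarrow> (\<exists>v\<in>carrier R. I = {a \<in> carrier R. v \<otimes>\<^bsub>R\<^esub> a = \<zero>\<^bsub>R\<^esub>})"

end

theory Submission
  imports Defs "HOL-Number_Theory.Residues"
begin

(* Write J for the augmentation ideal, the kernel of the map eps sending every group element to 1.
  It is maximal, and it lies in every maximal ideal since each generator 1 - g is nilpotent:
  (1 - g)^p = 0 in characteristic p.  So J is the Jacobson radical.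

  A basis g_0, ..., g_(m-1) of G as a vector space over F_p identifies the group algebra with
  F_p[x_0, ..., x_(m-1)] / (x_i^p), where x_i = 1 - g_i, and J^k with the span of the monomials of
  degree at least k.  Hence J^(N+1) = 0, and the top monomial, the product of the x_i^(p-1), is the
  sum sigma of all group elements; as everything annihilated by J is a multiple of sigma, the socle
  J^N is F_p sigma.

  For 0 < r < N there are monomials a, b of degree r and a', b' of degree N - r with
  a a' = b b' = sigma and a b' = b a' = 0 (move one degree between x_0 and x_1).  If J^r = (v), write
  a = u v and b = u' v; since J kills J^r J^(N-r), u acts there as eps(u), so
  eps(u) (v a') = sigma, eps(u') (v a') = 0 and eps(u') (v b') = sigma, which is impossible.  If
  J^i = Ann(v) with 2 <= i <= N, then v maps J^(i-1) into F_p sigma, so v kills a suitable combination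
  w of a' and b' (of degree i - 1 = N - r); then w lies in J^i, hence kills a and b, which forces
  v a' = 0, i.e. a' in J^i and sigma = a' a = 0. *)

lemma exists_bounded_summands:
  fixes bound :: "nat \<Rightarrow> nat"
  assumes "t \<le> (\<Sum>i<n. bound i)"
  shows "\<exists>e. (\<forall>i. e i \<le> bound i) \<and> (\<Sum>i<n. e i) = t"
  using assms
proof (induction n arbitrary: t)
  case 0
  then show ?case by (intro exI[of _ "\<lambda>_. 0"]) auto
next
  case (Suc n)
  define q where "q = min t (bound n)"
  have "t - q \<le> (\<Sum>i<n. bound i)"
    using Suc.prems by (auto simp: q_def)
  then obtain e where e: "\<forall>i. e i \<le> bound i" "(\<Sum>i<n. e i) = t - q"
    using Suc.IH by blast
  have "(\<Sum>i<n. (e(n := q)) i) = (\<Sum>i<n. e i)"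
    by (rule sum.cong) auto
  then have "(\<Sum>i<Suc n. (e(n := q)) i) = t"
    using e by (simp add: q_def)
  moreover have "\<forall>i. (e(n := q)) i \<le> bound i"
    using e by (auto simp: q_def)
  ultimately show ?case by blast
qed

lemma of_nat_card_UNIV_eq_0: "of_nat (card (UNIV :: 'a::ring_1 set)) = (0 :: 'a)"
  using CHAR_dvd_CARD[where 'a = 'a] by (simp add: of_nat_eq_0_iff_char_dvd)

lemma of_nat_choose_prime_eq_0:
  assumes "prime p" and "of_nat p = (0 :: 'a::comm_ring_1)" and "0 < j" and "j < p"
  shows "of_nat (p choose j) = (0 :: 'a)"
proof -
  have "p dvd (p choose j)"
    using assms by (intro dvd_choose_prime) auto
  then show ?thesis
    using assms(2) by (auto elim!: dvdE)
qed

lemma neg_one_pow_mult_choose_pred_prime: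
  assumes "prime p" and "of_nat p = (0 :: 'a::comm_ring_1)" and "j \<le> p - 1"
  shows "(-1) ^ j * of_nat (p - 1 choose j) = (1 :: 'a)"
  using assms(3)
proof (induction j)
  case 0
  then show ?case by simp
next
  case (Suc j)
  have p: "p = Suc (p - 1)"
    using prime_gt_0_nat[OF assms(1)] by simp
  have "p choose Suc j = (p - 1 choose j) + (p - 1 choose Suc j)"
    by (subst p) simp
  moreover have "of_nat (p choose Suc j) = (0 :: 'a)"
    using Suc.prems assms by (intro of_nat_choose_prime_eq_0) auto
  ultimately have "of_nat (p - 1 choose Suc j) = - (of_nat (p - 1 choose j) :: 'a)"
    by (simp add: eq_neg_iff_add_eq_0 add.commute)
  then show ?case
    using Suc by simp
qed

lemma neg_one_pow_prime:
  assumes "prime p" and "of_nat p = (0 :: 'a::comm_ring_1)"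
  shows "(-1 :: 'a) ^ p = -1"
proof (cases "p = 2")
  case True
  then have "(1 :: 'a) = -1"
    using assms(2) by (simp add: eq_neg_iff_add_eq_0)
  then show ?thesis
    using True by simp
next
  case False
  then have "odd p"
    using assms(1) prime_ge_2_nat[of p] prime_odd_nat[of p] by auto
  then show ?thesis by simp
qed

text \<open>Pascal's rule in the form \<open>(1 - X)^(k+1) = (1 - X)^k - X (1 - X)^k\<close>, with the coefficient
  of \<open>X^j\<close> weighted by \<open>f j\<close>.\<close>
lemma sum_alternating_choose_Suc:
  fixes f :: "nat \<Rightarrow> 'a::comm_ring_1"
  shows "(\<Sum>j\<le>Suc k. f j * ((-1) ^ j * of_nat (Suc k choose j)))
       = (\<Sum>j\<le>k. f j * ((-1) ^ j * of_nat (k choose j)))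
         - (\<Sum>j\<le>k. f (Suc j) * ((-1) ^ j * of_nat (k choose j)))"
proof -
  have "(\<Sum>j\<le>Suc k. f j * ((-1) ^ j * of_nat (Suc k choose j)))
      = f 0 + (\<Sum>j\<le>k. f (Suc j) * ((-1) ^ Suc j * of_nat (Suc k choose Suc j)))"
    by (subst sum.atMost_Suc_shift) simp
  also have "\<dots> = f 0 + (\<Sum>j\<le>k. f (Suc j) * ((-1) ^ Suc j * of_nat (k choose Suc j)))
                - (\<Sum>j\<le>k. f (Suc j) * ((-1) ^ j * of_nat (k choose j)))"
  proof -
    have "f (Suc j) * ((-1) ^ Suc j * of_nat (Suc k choose Suc j))
        = f (Suc j) * ((-1) ^ Suc j * of_nat (k choose Suc j))
          - f (Suc j) * ((-1) ^ j * of_nat (k choose j))" for j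
      by (simp add: algebra_simps)
    then show ?thesis
      by (simp add: sum_subtractf)
  qed
  also have "f 0 + (\<Sum>j\<le>k. f (Suc j) * ((-1) ^ Suc j * of_nat (k choose Suc j)))
           = (\<Sum>j\<le>k. f j * ((-1) ^ j * of_nat (k choose j)))"
  proof (cases k)
    case 0
    then show ?thesis by simp
  next
    case (Suc k')
    have "(\<Sum>j\<le>k. f j * ((-1) ^ j * of_nat (k choose j)))
        = f 0 + (\<Sum>j\<le>k'. f (Suc j) * ((-1) ^ Suc j * of_nat (k choose Suc j)))"
      unfolding Suc by (subst sum.atMost_Suc_shift) simp
    also have "(\<Sum>j\<le>k'. f (Suc j) * ((-1) ^ Suc j * of_nat (k choose Suc j)))
             = (\<Sum>j\<le>k. f (Suc j) * ((-1) ^ Suc j * of_nat (k choose Suc j)))"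
      unfolding Suc by (simp add: binomial_eq_0)
    finally show ?thesis by simp
  qed
  finally show ?thesis by simp
qed

lemma (in cring) ideal_pow_ideal: "ideal I R \<Longrightarrow> ideal (ideal_pow R I k) R"
  by (induction k) (simp_all add: oneideal ideal_prod_is_ideal)

lemma (in cring) ideal_pow_one: "ideal I R \<Longrightarrow> ideal_pow R I 1 = I"
  by (simp add: ideal_prod_one)

lemma (in cring) ideal_pow_add:
  assumes "ideal I R"
  shows "ideal_pow R I (a + b) = ideal_prod R (ideal_pow R I a) (ideal_pow R I b)"
proof (induction a)
  case 0
  show ?case
    using ideal_prod_commute[OF oneideal ideal_pow_ideal[OF assms]]
      ideal_prod_one[OF ideal_pow_ideal[OF assms]] by simp
next
  case (Suc a)
  then show ?case
    using assms by (simp add: ideal_prod_assoc ideal_pow_ideal)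
qed

lemma (in cring) ideal_pow_mult:
  "\<lbrakk> ideal I R; x \<in> ideal_pow R I a; z \<in> ideal_pow R I b \<rbrakk> \<Longrightarrow> x \<otimes> z \<in> ideal_pow R I (a + b)"
  by (simp add: ideal_pow_add ideal_prod.prod)

lemma (in cring) primeideal_pow_imp_mem:
  assumes P: "primeideal P R" and a: "a \<in> carrier R" and pow: "a [^] (n::nat) \<in> P"
  shows "a \<in> P"
  using pow
proof (induction n)
  case 0
  then have "P = carrier R"
    using P by (simp add: primeideal.axioms(1) ideal.one_imp_carrier)
  then show ?case
    using primeideal.I_notcarr[OF P] by simp
next
  case (Suc n)
  then have "a [^] n \<otimes> a \<in> P" by simp
  then show ?case
    using primeideal.I_prime[OF P, of "a [^] n" a] a Suc by auto
qed

lemma (in group) l_mult_bij: "k \<in> carrier G \<Longrightarrow> bij_betw (\<lambda>l. k \<otimes> l) (carrier G) (carrier G)"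
  by (rule bij_betwI[where g = "\<lambda>l. inv k \<otimes> l"]) (auto simp: m_assoc[symmetric])

lemma (in comm_group) inv_mult_bij: "g \<in> carrier G \<Longrightarrow> bij_betw (\<lambda>k. inv k \<otimes> g) (carrier G) (carrier G)"
  by (rule bij_betwI[where g = "\<lambda>k. inv k \<otimes> g"]) (auto simp: inv_mult_group m_ac)

section \<open>The group algebra of a finite abelian group\<close>

locale fin_group_algebra = G: comm_group G for G :: "('g, 'c) monoid_scheme" (structure) +
  fixes A :: "('g \<Rightarrow> 'k::field) ring"
  assumes A_def: "A = group_algebra G" and finite_carrier: "finite (carrier G)"
begin

lemma carrier_A: "carrier A = {f. \<forall>x. x \<notin> carrier G \<longrightarrow> f x = 0}"
  by (simp add: A_def group_algebra_def)

lemma mult_A: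
  "a \<otimes>\<^bsub>A\<^esub> b = (\<lambda>g. if g \<in> carrier G then (\<Sum>h\<in>carrier G. a h * b (inv h \<otimes> g)) else 0)"
  by (simp add: A_def group_algebra_def)

lemma one_A: "\<one>\<^bsub>A\<^esub> = (\<lambda>g. if g = \<one> then 1 else 0)"
  by (simp add: A_def group_algebra_def)

lemma zero_A: "\<zero>\<^bsub>A\<^esub> = (\<lambda>_. 0)"
  by (simp add: A_def group_algebra_def)

lemma add_A: "a \<oplus>\<^bsub>A\<^esub> b = (\<lambda>g. a g + b g)"
  by (simp add: A_def group_algebra_def)

lemma carrier_A_vanishes: "f \<in> carrier A \<Longrightarrow> x \<notin> carrier G \<Longrightarrow> f x = 0"
  by (simp add: carrier_A)

lemma A_m_assoc:
  assumes "a \<in> carrier A" "b \<in> carrier A" "c \<in> carrier A"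
  shows "(a \<otimes>\<^bsub>A\<^esub> b) \<otimes>\<^bsub>A\<^esub> c = a \<otimes>\<^bsub>A\<^esub> (b \<otimes>\<^bsub>A\<^esub> c)"
proof
  fix g
  show "((a \<otimes>\<^bsub>A\<^esub> b) \<otimes>\<^bsub>A\<^esub> c) g = (a \<otimes>\<^bsub>A\<^esub> (b \<otimes>\<^bsub>A\<^esub> c)) g"
  proof (cases "g \<in> carrier G")
    case False
    then show ?thesis by (simp add: mult_A)
  next
    case g: True
    have inner: "(\<Sum>h\<in>carrier G. b (inv k \<otimes> h) * c (inv h \<otimes> g))
               = (\<Sum>l\<in>carrier G. b l * c (inv l \<otimes> (inv k \<otimes> g)))" if k: "k \<in> carrier G" for k
    proof -
      have "(\<Sum>h\<in>carrier G. b (inv k \<otimes> h) * c (inv h \<otimes> g))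
          = (\<Sum>l\<in>carrier G. b (inv k \<otimes> (k \<otimes> l)) * c (inv (k \<otimes> l) \<otimes> g))"
        using sum.reindex_bij_betw[OF G.l_mult_bij[OF k], of "\<lambda>h. b (inv k \<otimes> h) * c (inv h \<otimes> g)"]
        by simp
      also have "\<dots> = (\<Sum>l\<in>carrier G. b l * c (inv l \<otimes> (inv k \<otimes> g)))"
        using k g by (intro sum.cong) (simp_all add: G.m_assoc[symmetric] G.inv_mult_group)
      finally show ?thesis .
    qed
    have "((a \<otimes>\<^bsub>A\<^esub> b) \<otimes>\<^bsub>A\<^esub> c) g
        = (\<Sum>h\<in>carrier G. (\<Sum>k\<in>carrier G. a k * b (inv k \<otimes> h)) * c (inv h \<otimes> g))"
      using g by (simp add: mult_A)
    also have "\<dots> = (\<Sum>k\<in>carrier G. a k * (\<Sum>h\<in>carrier G. b (inv k \<otimes> h) * c (inv h \<otimes> g)))"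
      by (simp add: sum_distrib_left sum_distrib_right mult.assoc) (rule sum.swap)
    also have "\<dots> = (a \<otimes>\<^bsub>A\<^esub> (b \<otimes>\<^bsub>A\<^esub> c)) g"
      using g by (simp add: mult_A inner)
    finally show ?thesis .
  qed
qed

lemma A_m_comm:
  assumes "a \<in> carrier A" "b \<in> carrier A"
  shows "a \<otimes>\<^bsub>A\<^esub> b = b \<otimes>\<^bsub>A\<^esub> a"
proof
  fix g
  show "(a \<otimes>\<^bsub>A\<^esub> b) g = (b \<otimes>\<^bsub>A\<^esub> a) g"
  proof (cases "g \<in> carrier G")
    case False
    then show ?thesis by (simp add: mult_A)
  next
    case g: True
    have "(\<Sum>h\<in>carrier G. a h * b (inv h \<otimes> g))
        = (\<Sum>k\<in>carrier G. a (inv k \<otimes> g) * b (inv (inv k \<otimes> g) \<otimes> g))"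
      using sum.reindex_bij_betw[OF G.inv_mult_bij[OF g], of "\<lambda>h. a h * b (inv h \<otimes> g)"] by simp
    also have "\<dots> = (\<Sum>k\<in>carrier G. b k * a (inv k \<otimes> g))"
      using g by (intro sum.cong) (simp_all add: G.inv_mult_group G.m_ac)
    finally show ?thesis
      using g by (simp add: mult_A)
  qed
qed

lemma A_l_one: "a \<in> carrier A \<Longrightarrow> \<one>\<^bsub>A\<^esub> \<otimes>\<^bsub>A\<^esub> a = a"
  by (rule ext) (auto simp: mult_A one_A if_distrib[of "\<lambda>x. x * _"] finite_carrier carrier_A cong: if_cong)

lemma cring_A: "cring A"
proof (rule cringI)
  show "abelian_group A"
  proof (rule abelian_groupI)
    fix x
    assume "x \<in> carrier A"
    then show "\<exists>y\<in>carrier A. y \<oplus>\<^bsub>A\<^esub> x = \<zero>\<^bsub>A\<^esub>"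
      by (intro bexI[of _ "\<lambda>g. - x g"]) (auto simp: add_A zero_A carrier_A)
  qed (auto simp: add_A zero_A carrier_A)
  show "comm_monoid A"
  proof (rule comm_monoidI)
    fix x y
    assume "x \<in> carrier A" "y \<in> carrier A"
    then show "x \<otimes>\<^bsub>A\<^esub> y \<in> carrier A"
      by (simp add: carrier_A mult_A)
  qed (simp_all add: A_m_assoc A_l_one A_m_comm, auto simp: one_A carrier_A)
qed (rule ext, simp add: mult_A add_A sum.distrib ring_distribs)

end

sublocale fin_group_algebra \<subseteq> A: cring A
  by (rule cring_A)

context fin_group_algebra
begin

lemma a_inv_A: "a \<in> carrier A \<Longrightarrow> \<ominus>\<^bsub>A\<^esub> a = (\<lambda>g. - a g)"
  using A.minus_equality[of "\<lambda>g. - a g" a] by (auto simp: add_A zero_A carrier_A)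

lemma minus_A: "a \<in> carrier A \<Longrightarrow> b \<in> carrier A \<Longrightarrow> a \<ominus>\<^bsub>A\<^esub> b = (\<lambda>g. a g - b g)"
  by (simp add: a_minus_def a_inv_A add_A)

lemma finsum_A_apply:
  assumes "finite S" "f \<in> S \<rightarrow> carrier A"
  shows "finsum A f S x = (\<Sum>s\<in>S. f s x)"
  using assms
proof (induction S rule: finite_induct)
  case empty
  then show ?case by (simp add: zero_A)
next
  case (insert s S)
  then show ?case by (simp add: A.finsum_insert add_A)
qed

text \<open>\<open>delta h\<close> is the group element \<open>h\<close>, \<open>scalar c\<close> the field element \<open>c\<close> and \<open>norm_elem\<close> the sum
  of all group elements, viewed in the group algebra.\<close>

definition delta :: "'g \<Rightarrow> 'g \<Rightarrow> 'k" where
  "delta h = (\<lambda>x. if x = h then 1 else 0)"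

definition scalar :: "'k \<Rightarrow> 'g \<Rightarrow> 'k" where
  "scalar c = (\<lambda>x. if x = \<one> then c else 0)"

definition norm_elem :: "'g \<Rightarrow> 'k" where
  "norm_elem = (\<lambda>x. if x \<in> carrier G then 1 else 0)"

definition augmentation :: "('g \<Rightarrow> 'k) \<Rightarrow> 'k" where
  "augmentation a = (\<Sum>g\<in>carrier G. a g)"

lemma delta_closed [simp]: "h \<in> carrier G \<Longrightarrow> delta h \<in> carrier A"
  by (auto simp: delta_def carrier_A)

lemma scalar_closed [simp]: "scalar c \<in> carrier A"
  by (auto simp: scalar_def carrier_A)

lemma norm_elem_closed [simp]: "norm_elem \<in> carrier A"
  by (auto simp: norm_elem_def carrier_A)

lemma one_A_eq_delta: "\<one>\<^bsub>A\<^esub> = delta \<one>"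
  by (simp add: one_A delta_def)

lemma delta_mult:
  "h \<in> carrier G \<Longrightarrow> delta h \<otimes>\<^bsub>A\<^esub> a = (\<lambda>x. if x \<in> carrier G then a (inv h \<otimes> x) else 0)"
  by (auto simp: mult_A delta_def if_distrib[of "\<lambda>x. x * _"] finite_carrier cong: if_cong)

lemma scalar_mult: "a \<in> carrier A \<Longrightarrow> scalar c \<otimes>\<^bsub>A\<^esub> a = (\<lambda>x. c * a x)"
  by (auto simp: mult_A scalar_def if_distrib[of "\<lambda>x. x * _"] finite_carrier carrier_A cong: if_cong)

lemma scalar_mult_norm_elem: "scalar c \<otimes>\<^bsub>A\<^esub> norm_elem = (\<lambda>x. if x \<in> carrier G then c else 0)"
  unfolding scalar_mult[OF norm_elem_closed] by (auto simp: norm_elem_def)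

lemma scalar_mult_norm_elem_eq_zero_iff: "scalar c \<otimes>\<^bsub>A\<^esub> norm_elem = \<zero>\<^bsub>A\<^esub> \<longleftrightarrow> c = 0"
  unfolding scalar_mult_norm_elem using G.one_closed by (auto simp: zero_A dest: fun_cong[of _ _ \<one>])

lemma mult_norm_elem: "a \<otimes>\<^bsub>A\<^esub> norm_elem = scalar (augmentation a) \<otimes>\<^bsub>A\<^esub> norm_elem"
proof -
  have "(\<Sum>h\<in>carrier G. a h * norm_elem (inv h \<otimes> g)) = augmentation a" if "g \<in> carrier G" for g
    using that by (auto simp: norm_elem_def augmentation_def intro!: sum.cong)
  then show ?thesis
    unfolding scalar_mult_norm_elem by (simp add: mult_A fun_eq_iff)
qed

lemma augmentation_mult:
  assumes "a \<in> carrier A" "b \<in> carrier A"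
  shows "augmentation (a \<otimes>\<^bsub>A\<^esub> b) = augmentation a * augmentation b"
proof -
  have shift: "(\<Sum>g\<in>carrier G. b (inv h \<otimes> g)) = augmentation b" if "h \<in> carrier G" for h
    using sum.reindex_bij_betw[OF G.l_mult_bij[of "inv h"], of b] that by (simp add: augmentation_def)
  have "augmentation (a \<otimes>\<^bsub>A\<^esub> b) = (\<Sum>g\<in>carrier G. \<Sum>h\<in>carrier G. a h * b (inv h \<otimes> g))"
    by (simp add: augmentation_def mult_A)
  also have "\<dots> = (\<Sum>h\<in>carrier G. a h * (\<Sum>g\<in>carrier G. b (inv h \<otimes> g)))"
    by (subst sum.swap) (simp add: sum_distrib_left)
  also have "\<dots> = augmentation a * augmentation b"
    by (simp add: shift augmentation_def sum_distrib_right)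
  finally show ?thesis .
qed

lemma augmentation_add: "augmentation (a \<oplus>\<^bsub>A\<^esub> b) = augmentation a + augmentation b"
  by (simp add: augmentation_def add_A sum.distrib)

lemma augmentation_minus:
  "a \<in> carrier A \<Longrightarrow> b \<in> carrier A \<Longrightarrow> augmentation (a \<ominus>\<^bsub>A\<^esub> b) = augmentation a - augmentation b"
  by (simp add: augmentation_def minus_A sum_subtractf)

lemma augmentation_scalar [simp]: "augmentation (scalar c) = c"
  by (simp add: augmentation_def scalar_def finite_carrier)

lemma augmentation_delta [simp]: "g \<in> carrier G \<Longrightarrow> augmentation (delta g) = 1"
  by (simp add: augmentation_def delta_def finite_carrier)

lemma augmentation_one [simp]: "augmentation \<one>\<^bsub>A\<^esub> = 1"
  by (simp add: one_A_eq_delta)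

definition aug_gen :: "'g \<Rightarrow> 'g \<Rightarrow> 'k" where
  "aug_gen g = \<one>\<^bsub>A\<^esub> \<ominus>\<^bsub>A\<^esub> delta g"

lemma aug_gen_closed [simp]: "g \<in> carrier G \<Longrightarrow> aug_gen g \<in> carrier A"
  by (simp add: aug_gen_def)

lemma aug_gen_apply:
  "g \<in> carrier G \<Longrightarrow> aug_gen g x = (if x = \<one> then 1 else 0) - (if x = g then 1 else 0)"
  unfolding aug_gen_def by (simp add: minus_A) (simp add: one_A delta_def)

lemma aug_gen_one: "aug_gen \<one> = \<zero>\<^bsub>A\<^esub>"
  by (rule ext) (simp add: aug_gen_apply zero_A)

lemma aug_gen_mult:
  assumes h: "h \<in> carrier G" and h': "h' \<in> carrier G"
  shows "aug_gen (h \<otimes> h') = aug_gen h \<oplus>\<^bsub>A\<^esub> delta h \<otimes>\<^bsub>A\<^esub> aug_gen h'"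
proof
  fix x
  show "aug_gen (h \<otimes> h') x = (aug_gen h \<oplus>\<^bsub>A\<^esub> delta h \<otimes>\<^bsub>A\<^esub> aug_gen h') x"
  proof (cases "x \<in> carrier G")
    case False
    then have "x \<noteq> \<one>" "x \<noteq> h" "x \<noteq> h \<otimes> h'"
      using h h' by auto
    then show ?thesis
      using h h' False by (simp add: aug_gen_apply add_A delta_mult)
  next
    case True
    have "(inv h \<otimes> x = \<one>) = (x = h)" "(inv h \<otimes> x = h') = (x = h \<otimes> h')"
      using h h' True by (metis G.inv_solve_left G.r_one G.one_closed)+
    then show ?thesis
      using h h' True by (simp add: aug_gen_apply add_A delta_mult)
  qed
qed

lemma aug_gen_mult_eq: "b \<in> carrier A \<Longrightarrow> g \<in> carrier G \<Longrightarrow> aug_gen g \<otimes>\<^bsub>A\<^esub> b = b \<ominus>\<^bsub>A\<^esub> delta g \<otimes>\<^bsub>A\<^esub> b"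
  by (simp add: aug_gen_def a_minus_def A.l_distr A.l_minus)

definition aug_ideal :: "('g \<Rightarrow> 'k) set" where
  "aug_ideal = {a \<in> carrier A. augmentation a = 0}"

lemma aug_gen_in_aug_ideal: "g \<in> carrier G \<Longrightarrow> aug_gen g \<in> aug_ideal"
  by (simp add: aug_ideal_def aug_gen_def augmentation_minus)

lemma aug_ideal_eq_finsum:
  assumes a: "a \<in> aug_ideal"
  shows "a = (\<Oplus>\<^bsub>A\<^esub>g\<in>carrier G. scalar (- a g) \<otimes>\<^bsub>A\<^esub> aug_gen g)"
proof
  fix x
  have aA: "a \<in> carrier A" and a0: "augmentation a = 0"
    using a by (auto simp: aug_ideal_def)
  have "(\<Oplus>\<^bsub>A\<^esub>g\<in>carrier G. scalar (- a g) \<otimes>\<^bsub>A\<^esub> aug_gen g) x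
      = (\<Sum>g\<in>carrier G. - a g * ((if x = \<one> then 1 else 0) - (if x = g then 1 else 0)))"
    by (subst finsum_A_apply) (auto simp: finite_carrier scalar_mult aug_gen_apply)
  also have "\<dots> = (\<Sum>g\<in>carrier G. a g * (if x = g then 1 else 0))
                  - (if x = \<one> then 1 else 0) * augmentation a"
    by (simp add: augmentation_def algebra_simps sum_subtractf sum_distrib_left sum_distrib_right sum_negf)
  also have "\<dots> = a x"
    using aA a0 finite_carrier
    by (cases "x \<in> carrier G") (auto simp: carrier_A if_distrib[of "\<lambda>y. _ * y"] cong: if_cong)
  finally show "a x = (\<Oplus>\<^bsub>A\<^esub>g\<in>carrier G. scalar (- a g) \<otimes>\<^bsub>A\<^esub> aug_gen g) x" by simp
qed

lemma aug_ideal_subsetI: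
  assumes S: "S \<subseteq> carrier A" "\<zero>\<^bsub>A\<^esub> \<in> S" "\<And>u v. u \<in> S \<Longrightarrow> v \<in> S \<Longrightarrow> u \<oplus>\<^bsub>A\<^esub> v \<in> S"
    "\<And>c u. u \<in> S \<Longrightarrow> scalar c \<otimes>\<^bsub>A\<^esub> u \<in> S"
    and gen: "\<And>g. g \<in> carrier G \<Longrightarrow> aug_gen g \<in> S"
  shows "aug_ideal \<subseteq> S"
proof
  fix a
  assume a: "a \<in> aug_ideal"
  have "(\<Oplus>\<^bsub>A\<^esub>g\<in>F. scalar (- a g) \<otimes>\<^bsub>A\<^esub> aug_gen g) \<in> S" if "finite F" "F \<subseteq> carrier G" for F
    using that
  proof (induction F rule: finite_induct)
    case empty
    then show ?case using S by simp
  next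
    case (insert g F)
    then show ?case
      using S gen by (subst A.finsum_insert) auto
  qed
  then show "a \<in> S"
    using finite_carrier aug_ideal_eq_finsum[OF a] by force
qed

lemma aug_ideal_ideal: "ideal aug_ideal A"
proof (rule idealI)
  show "ring A" by (rule A.ring_axioms)
  show "subgroup aug_ideal (add_monoid A)"
  proof (rule A.add.subgroupI)
    show "aug_ideal \<subseteq> carrier A" "aug_ideal \<noteq> {}"
      using A.zero_closed by (auto simp: aug_ideal_def augmentation_def zero_A)
  next
    fix a b
    assume a: "a \<in> aug_ideal" and b: "b \<in> aug_ideal"
    show "\<ominus>\<^bsub>A\<^esub> a \<in> aug_ideal"
      using a by (simp add: aug_ideal_def a_inv_A augmentation_def sum_negf carrier_A)
    show "a \<oplus>\<^bsub>A\<^esub> b \<in> aug_ideal"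
      using a b by (simp add: aug_ideal_def augmentation_add)
  qed
qed (auto simp: aug_ideal_def augmentation_mult)

lemma aug_ideal_maximal: "maximalideal aug_ideal A"
proof (rule maximalidealI)
  show "ideal aug_ideal A" by (rule aug_ideal_ideal)
  have "\<one>\<^bsub>A\<^esub> \<notin> aug_ideal"
    by (simp add: aug_ideal_def)
  then show "carrier A \<noteq> aug_ideal"
    using A.one_closed by blast
next
  fix K
  assume K: "ideal K A" "aug_ideal \<subseteq> K" "K \<subseteq> carrier A"
  show "K = aug_ideal \<or> K = carrier A"
  proof (cases "K \<subseteq> aug_ideal")
    case False
    then obtain a where aK: "a \<in> K" and a: "a \<notin> aug_ideal" by blast
    have aA: "a \<in> carrier A" using aK K by blast
    then have a0: "augmentation a \<noteq> 0"
      using a by (auto simp: aug_ideal_def)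
    define u where "u = scalar (inverse (augmentation a)) \<otimes>\<^bsub>A\<^esub> a"
    have uK: "u \<in> K" and uA: "u \<in> carrier A"
      unfolding u_def using K aK aA by (simp_all add: ideal.I_l_closed)
    have "\<one>\<^bsub>A\<^esub> \<ominus>\<^bsub>A\<^esub> u \<in> aug_ideal"
      using uA a0 aA by (simp add: aug_ideal_def augmentation_minus u_def augmentation_mult)
    then have "(\<one>\<^bsub>A\<^esub> \<ominus>\<^bsub>A\<^esub> u) \<oplus>\<^bsub>A\<^esub> u \<in> K"
      using uK K by (meson additive_subgroup.a_closed ideal.axioms(1) subsetD)
    moreover have "(\<one>\<^bsub>A\<^esub> \<ominus>\<^bsub>A\<^esub> u) \<oplus>\<^bsub>A\<^esub> u = \<one>\<^bsub>A\<^esub>"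
      using uA by (simp add: a_minus_def A.a_assoc A.l_neg)
    ultimately show ?thesis
      using K(1) by (simp add: ideal.one_imp_carrier)
  qed (use K in blast)
qed

lemma aug_annihilated_eq_scalar:
  assumes u: "u \<in> carrier A" and ann: "\<And>g. g \<in> carrier G \<Longrightarrow> aug_gen g \<otimes>\<^bsub>A\<^esub> u = \<zero>\<^bsub>A\<^esub>"
  shows "u = scalar (u \<one>) \<otimes>\<^bsub>A\<^esub> norm_elem"
proof
  fix x
  show "u x = (scalar (u \<one>) \<otimes>\<^bsub>A\<^esub> norm_elem) x"
  proof (cases "x \<in> carrier G")
    case False
    then show ?thesis
      using u by (simp add: carrier_A_vanishes scalar_mult_norm_elem)
  next
    case x: True
    have "aug_gen x \<otimes>\<^bsub>A\<^esub> u = u \<ominus>\<^bsub>A\<^esub> delta x \<otimes>\<^bsub>A\<^esub> u"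
      using x u by (rule aug_gen_mult_eq[rotated])
    then have "u \<ominus>\<^bsub>A\<^esub> delta x \<otimes>\<^bsub>A\<^esub> u = \<zero>\<^bsub>A\<^esub>"
      using ann[OF x] by simp
    then have "(u \<ominus>\<^bsub>A\<^esub> delta x \<otimes>\<^bsub>A\<^esub> u) x = 0"
      by (simp add: zero_A)
    then have "u x - (delta x \<otimes>\<^bsub>A\<^esub> u) x = 0"
      by (simp add: minus_A[OF u A.m_closed[OF delta_closed[OF x] u]])
    then have "u x = u \<one>"
      using x by (simp add: delta_mult)
    then show ?thesis
      using x by (simp add: scalar_mult_norm_elem)
  qed
qed

lemma aug_ideal_eq_annihilator: "aug_ideal = {a \<in> carrier A. norm_elem \<otimes>\<^bsub>A\<^esub> a = \<zero>\<^bsub>A\<^esub>}"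
proof -
  have "norm_elem \<otimes>\<^bsub>A\<^esub> a = scalar (augmentation a) \<otimes>\<^bsub>A\<^esub> norm_elem" if "a \<in> carrier A" for a
    using A.m_comm[OF norm_elem_closed that] mult_norm_elem[of a] by simp
  then show ?thesis
    by (auto simp: aug_ideal_def scalar_mult_norm_elem_eq_zero_iff)
qed

end

section \<open>Bases of elementary abelian groups\<close>

locale elementary_abelian_group = comm_group G for G :: "('g, 'c) monoid_scheme" (structure) +
  fixes p :: nat
  assumes prime_p: "prime p" and exponent_p: "\<forall>x\<in>carrier G. x [^] p = \<one>"
begin

lemma p_gt_1: "1 < p"
  using prime_gt_1_nat[OF prime_p] .

lemma pow_mod_p: "x \<in> carrier G \<Longrightarrow> x [^] (n::nat) = x [^] (n mod p)"
  using exponent_p nat_pow_pow[of x p "n div p", symmetric] nat_pow_mult[of x "p * (n div p)" "n mod p"]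
  by simp

lemma inv_eq_pow_pred_p: "x \<in> carrier G \<Longrightarrow> inv x = x [^] (p - 1)"
  using exponent_p p_gt_1 nat_pow_Suc[of x "p - 1"] by (intro inv_equality) simp_all

definition lin_comb :: "(nat \<Rightarrow> 'g) \<Rightarrow> nat \<Rightarrow> (nat \<Rightarrow> nat) \<Rightarrow> 'g" where
  "lin_comb g k a = (\<Otimes>i\<in>{..<k}. g i [^] a i)"

definition coeff_vectors :: "nat \<Rightarrow> (nat \<Rightarrow> nat) set" where
  "coeff_vectors k = PiE {..<k} (\<lambda>_. {..<p})"

lemma card_coeff_vectors: "card (coeff_vectors k) = p ^ k"
  by (simp add: coeff_vectors_def card_PiE)

lemma lin_comb_closed [simp]: "\<forall>i. g i \<in> carrier G \<Longrightarrow> lin_comb g k a \<in> carrier G"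
  by (simp add: lin_comb_def)

lemma lin_comb_cong:
  "\<lbrakk> \<forall>i. g' i \<in> carrier G; \<And>i. i < k \<Longrightarrow> g i [^] a i = g' i [^] b i \<rbrakk>
   \<Longrightarrow> lin_comb g k a = lin_comb g' k b"
  unfolding lin_comb_def by (rule finprod_cong') auto

lemma lin_comb_Suc: "\<forall>i. g i \<in> carrier G \<Longrightarrow> lin_comb g (Suc k) a = g k [^] a k \<otimes> lin_comb g k a"
  unfolding lin_comb_def lessThan_Suc by (rule finprod_insert) auto

lemma lin_comb_zero: "lin_comb g k (\<lambda>_. 0) = \<one>"
  unfolding lin_comb_def by (rule finprod_one_eqI) simp

lemma lin_comb_mult:
  "\<forall>i. g i \<in> carrier G \<Longrightarrow> lin_comb g k a \<otimes> lin_comb g k b = lin_comb g k (\<lambda>i. a i + b i)"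
  unfolding lin_comb_def
  using finprod_multf[of "\<lambda>i. g i [^] a i" "{..<k}" "\<lambda>i. g i [^] b i"] by (simp add: nat_pow_mult)

lemma image_lin_comb_coeff_vectors:
  assumes g: "\<forall>i. g i \<in> carrier G"
  shows "lin_comb g k ` coeff_vectors k = range (lin_comb g k)"
proof -
  have "lin_comb g k a = lin_comb g k (\<lambda>i\<in>{..<k}. a i mod p)" for a
    using g by (intro lin_comb_cong) (auto intro: pow_mod_p)
  moreover have "(\<lambda>i\<in>{..<k}. a i mod p) \<in> coeff_vectors k" for a
    using p_gt_1 by (auto simp: coeff_vectors_def)
  ultimately show ?thesis by blast
qed

lemma range_lin_comb_pow:
  assumes g: "\<forall>i. g i \<in> carrier G" and x: "x \<in> range (lin_comb g k)"
  shows "x [^] (n::nat) \<in> range (lin_comb g k)"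
proof (induction n)
  case 0
  then show ?case
    using lin_comb_zero by (metis nat_pow_0 rangeI)
next
  case (Suc n)
  then show ?case
    using x lin_comb_mult[OF g] by auto
qed

text \<open>An exponent not divisible by \<open>p\<close> is invertible modulo \<open>p\<close>.\<close>
lemma range_lin_comb_pow_cancel:
  assumes g: "\<forall>i. g i \<in> carrier G" and h: "h \<in> carrier G"
    and hd: "h [^] d \<in> range (lin_comb g k)" and d: "\<not> p dvd d"
  shows "h \<in> range (lin_comb g k)"
proof -
  have "coprime d p"
    using prime_imp_coprime[OF prime_p d] by (simp add: coprime_commute)
  then obtain d' where "[d * d' = 1] (mod p)"
    using cong_solve_coprime_nat by auto
  then have "(d * d') mod p = 1"
    using p_gt_1 by (simp add: cong_def)
  then have "h = (h [^] d) [^] d'"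
    using h pow_mod_p[OF h, of "d * d'"] by (simp add: nat_pow_pow)
  then show ?thesis
    using range_lin_comb_pow[OF g hd, of d'] by metis
qed

lemma inj_on_lin_comb_extend:
  assumes g: "\<forall>i. g i \<in> carrier G" and inj: "inj_on (lin_comb g k) (coeff_vectors k)"
    and h: "h \<in> carrier G" and h_out: "h \<notin> range (lin_comb g k)"
  shows "inj_on (lin_comb (g(k := h)) (Suc k)) (coeff_vectors (Suc k))"
proof (rule inj_onI)
  let ?L = "lin_comb g k"
  have g': "\<forall>i. (g(k := h)) i \<in> carrier G"
    using g h by auto
  have split: "lin_comb (g(k := h)) (Suc k) a = h [^] a k \<otimes> ?L a" for a
    unfolding lin_comb_Suc[OF g'] using lin_comb_cong[OF g, of k "g(k := h)" a a] by simp
  have L: "?L a \<in> carrier G" for a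
    using g by simp
  have no_lt: False
    if a: "a \<in> coeff_vectors (Suc k)" and eq: "h [^] a k \<otimes> ?L a = h [^] b k \<otimes> ?L b"
      and lt: "a k < b k" and b: "b \<in> coeff_vectors (Suc k)" for a b
  proof -
    define d where "d = b k - a k"
    have "b k < p"
      using b by (simp add: coeff_vectors_def PiE_iff)
    then have "\<not> p dvd d"
      using lt by (auto simp: d_def dest: dvd_imp_le)
    have "h [^] a k \<otimes> ?L a = h [^] a k \<otimes> (h [^] d \<otimes> ?L b)"
      using eq lt h L by (simp add: d_def m_assoc[symmetric] nat_pow_mult)
    then have "?L a = h [^] d \<otimes> ?L b"
      using h L by simp
    then have "h [^] d = ?L a \<otimes> inv (?L b)"
      using h L by (simp add: m_assoc)
    also have "\<dots> = ?L a \<otimes> ?L b [^] (p - 1)"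
      using L by (simp add: inv_eq_pow_pred_p)
    finally have hd: "h [^] d = ?L a \<otimes> ?L b [^] (p - 1)" .
    obtain c where "?L b [^] (p - 1) = ?L c"
      using range_lin_comb_pow[OF g rangeI, of k b "p - 1"] by blast
    then have "h [^] d = ?L (\<lambda>i. a i + c i)"
      using hd lin_comb_mult[OF g] by simp
    then have "h [^] d \<in> range ?L"
      by simp
    then show False
      using range_lin_comb_pow_cancel[OF g h _ \<open>\<not> p dvd d\<close>] h_out by blast
  qed
  fix a b
  assume a: "a \<in> coeff_vectors (Suc k)" and b: "b \<in> coeff_vectors (Suc k)"
    and "lin_comb (g(k := h)) (Suc k) a = lin_comb (g(k := h)) (Suc k) b"
  then have eq: "h [^] a k \<otimes> ?L a = h [^] b k \<otimes> ?L b"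
    by (simp add: split)
  have ak: "a k = b k"
  proof (rule ccontr)
    assume "a k \<noteq> b k"
    then consider "a k < b k" | "b k < a k"
      by linarith
    then show False
      using no_lt[OF a eq _ b] no_lt[OF b eq[symmetric] _ a] by cases
  qed
  then have "?L a = ?L b"
    using eq h L by simp
  have restrict: "restrict c {..<k} \<in> coeff_vectors k" "?L (restrict c {..<k}) = ?L c"
    if "c \<in> coeff_vectors (Suc k)" for c
    using that by (auto simp: coeff_vectors_def PiE_iff intro: lin_comb_cong[OF g])
  have res: "restrict a {..<k} = restrict b {..<k}"
    by (rule inj_onD[OF inj]) (use restrict a b \<open>?L a = ?L b\<close> in auto)
  have "a i = b i" if "i < Suc k" for i
  proof (cases "i < k")
    case True
    then show ?thesis
      using fun_cong[OF res, of i] by simp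
  next
    case False
    then show ?thesis
      using ak that by (simp add: less_Suc_eq)
  qed
  then show "a = b"
    using a b by (intro PiE_ext[of _ "{..<Suc k}" "\<lambda>_. {..<p}"]) (auto simp: coeff_vectors_def)
qed

lemma sum_coeff_vectors_Suc:
  "(\<Sum>b\<in>coeff_vectors (Suc k). f b) = (\<Sum>j<p. \<Sum>a\<in>coeff_vectors k. f (a(k := j)))"
proof -
  have split: "coeff_vectors (Suc k) = (\<lambda>(j, a). a(k := j)) ` ({..<p} \<times> coeff_vectors k)"
    unfolding coeff_vectors_def lessThan_Suc by (rule PiE_insert_eq)
  have inj: "inj_on (\<lambda>(j, a). a(k := j)) ({..<p} \<times> coeff_vectors k)"
    unfolding coeff_vectors_def by (rule inj_combinator) simp
  have "(\<Sum>b\<in>coeff_vectors (Suc k). f b) = (\<Sum>(j, a)\<in>{..<p} \<times> coeff_vectors k. f (a(k := j)))"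
    unfolding split by (subst sum.reindex[OF inj]) (simp add: case_prod_beta')
  then show ?thesis
    by (simp add: sum.cartesian_product)
qed

lemma exists_basis:
  assumes fin: "finite (carrier G)" and card: "card (carrier G) = p ^ m"
  shows "\<exists>g. (\<forall>i. g i \<in> carrier G) \<and> bij_betw (lin_comb g m) (coeff_vectors m) (carrier G)"
proof -
  have "\<exists>g. (\<forall>i. g i \<in> carrier G) \<and> inj_on (lin_comb g k) (coeff_vectors k)" if "k \<le> m" for k
    using that
  proof (induction k)
    case 0
    have "coeff_vectors 0 = {\<lambda>_. undefined}"
      by (simp add: coeff_vectors_def)
    then show ?case
      by (intro exI[of _ "\<lambda>_. \<one>"]) auto
  next
    case (Suc k)
    then obtain g where g: "\<forall>i. g i \<in> carrier G" and inj: "inj_on (lin_comb g k) (coeff_vectors k)"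
      by auto
    have "card (range (lin_comb g k)) = p ^ k"
      using inj card_coeff_vectors image_lin_comb_coeff_vectors[OF g] by (metis card_image)
    also have "\<dots> < card (carrier G)"
      using Suc.prems p_gt_1 card by (simp add: power_strict_increasing)
    finally have "\<not> carrier G \<subseteq> range (lin_comb g k)"
      using card_mono[OF finite_imageI] image_lin_comb_coeff_vectors[OF g]
      by (metis coeff_vectors_def finite_PiE finite_lessThan not_le)
    then obtain h where h: "h \<in> carrier G" "h \<notin> range (lin_comb g k)"
      by blast
    moreover have "\<forall>i. (g(k := h)) i \<in> carrier G"
      using g h by simp
    ultimately show ?case
      using inj_on_lin_comb_extend[OF g inj] by blast
  qed
  then obtain g where g: "\<forall>i. g i \<in> carrier G" and inj: "inj_on (lin_comb g m) (coeff_vectors m)"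
    by blast
  have "lin_comb g m ` coeff_vectors m \<subseteq> carrier G"
    using g by auto
  moreover have "card (lin_comb g m ` coeff_vectors m) = card (carrier G)"
    using inj card_coeff_vectors card by (simp add: card_image)
  ultimately have "lin_comb g m ` coeff_vectors m = carrier G"
    using fin by (simp add: card_subset_eq)
  then show ?thesis
    using g inj by (auto simp: bij_betw_def)
qed

end

section \<open>The Jacobson radical in characteristic \<open>p\<close>\<close>

locale char_p_group_algebra = fin_group_algebra G A + elementary_abelian_group G p
  for G :: "('g, 'c) monoid_scheme" (structure) and A :: "('g \<Rightarrow> 'k::field) ring" and p +
  assumes char_p: "of_nat p = (0 :: 'k)"
begin

lemma aug_gen_pow_apply:
  assumes g: "g \<in> carrier G" and x: "x \<in> carrier G"
  shows "(aug_gen g [^]\<^bsub>A\<^esub> k) x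
       = (\<Sum>j\<le>k. (if x = g [^] j then 1 else 0) * ((-1) ^ j * of_nat (k choose j)))"
  using x
proof (induction k arbitrary: x)
  case 0
  then show ?case by (simp add: one_A)
next
  case (Suc k)
  have pow: "aug_gen g [^]\<^bsub>A\<^esub> k \<in> carrier A"
    using g by simp
  have "aug_gen g [^]\<^bsub>A\<^esub> Suc k = aug_gen g \<otimes>\<^bsub>A\<^esub> aug_gen g [^]\<^bsub>A\<^esub> k"
    using g by (simp add: A.m_comm[OF pow])
  also have "\<dots> = aug_gen g [^]\<^bsub>A\<^esub> k \<ominus>\<^bsub>A\<^esub> delta g \<otimes>\<^bsub>A\<^esub> aug_gen g [^]\<^bsub>A\<^esub> k"
    using pow g by (rule aug_gen_mult_eq)
  also have "\<dots> = (\<lambda>y. (aug_gen g [^]\<^bsub>A\<^esub> k) y - (delta g \<otimes>\<^bsub>A\<^esub> aug_gen g [^]\<^bsub>A\<^esub> k) y)"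
    using g pow by (simp add: minus_A)
  finally have step: "(aug_gen g [^]\<^bsub>A\<^esub> Suc k) x
           = (aug_gen g [^]\<^bsub>A\<^esub> k) x - (aug_gen g [^]\<^bsub>A\<^esub> k) (inv g \<otimes> x)"
    using g Suc.prems by (simp add: delta_mult)
  define F where "F j = (if x = g [^] j then 1 else (0 :: 'k))" for j :: nat
  have shift: "(inv g \<otimes> x = g [^] j) = (x = g [^] Suc j)" for j :: nat
    using g Suc.prems by (metis G.inv_solve_left G.nat_pow_Suc2 G.nat_pow_closed)
  have "inv g \<otimes> x \<in> carrier G"
    using g Suc.prems by simp
  then have "(aug_gen g [^]\<^bsub>A\<^esub> k) (inv g \<otimes> x)
           = (\<Sum>j\<le>k. F (Suc j) * ((-1) ^ j * of_nat (k choose j)))"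
    by (simp only: Suc.IH shift F_def)
  moreover have "(aug_gen g [^]\<^bsub>A\<^esub> k) x = (\<Sum>j\<le>k. F j * ((-1) ^ j * of_nat (k choose j)))"
    by (simp only: Suc.IH[OF Suc.prems] F_def)
  ultimately have "(aug_gen g [^]\<^bsub>A\<^esub> Suc k) x
                 = (\<Sum>j\<le>Suc k. F j * ((-1) ^ j * of_nat (Suc k choose j)))"
    by (simp only: step sum_alternating_choose_Suc)
  then show ?case
    by (simp only: F_def)
qed

definition power_sum :: "'g \<Rightarrow> 'g \<Rightarrow> 'k" where
  "power_sum g = (\<lambda>x. if x \<in> carrier G then (\<Sum>j<p. if x = g [^] j then 1 else 0) else 0)"

lemma power_sum_closed [simp]: "power_sum g \<in> carrier A"
  by (simp add: power_sum_def carrier_A)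

lemma aug_gen_pow_pred_p: "g \<in> carrier G \<Longrightarrow> aug_gen g [^]\<^bsub>A\<^esub> (p - 1) = power_sum g"
proof
  fix x
  assume g: "g \<in> carrier G"
  have p: "{..p - 1} = {..<p}"
    using p_gt_1 by auto
  show "(aug_gen g [^]\<^bsub>A\<^esub> (p - 1)) x = power_sum g x"
  proof (cases "x \<in> carrier G")
    case False
    then show ?thesis
      using g by (simp add: carrier_A_vanishes power_sum_def)
  next
    case True
    have "(\<Sum>j\<le>p - 1. (if x = g [^] j then 1 else 0) * ((-1) ^ j * of_nat (p - 1 choose j)))
        = (\<Sum>j<p. if x = g [^] j then 1 else (0 :: 'k))"
      unfolding p[symmetric] using neg_one_pow_mult_choose_pred_prime[OF prime_p char_p]
      by (intro sum.cong) auto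
    then show ?thesis
      using g True by (simp add: aug_gen_pow_apply power_sum_def)
  qed
qed

lemma aug_gen_pow_p: "g \<in> carrier G \<Longrightarrow> aug_gen g [^]\<^bsub>A\<^esub> p = \<zero>\<^bsub>A\<^esub>"
proof
  fix x
  assume g: "g \<in> carrier G"
  let ?t = "\<lambda>j. (if x = g [^] j then 1 else 0) * ((-1) ^ j * of_nat (p choose j)) :: 'k"
  show "(aug_gen g [^]\<^bsub>A\<^esub> p) x = \<zero>\<^bsub>A\<^esub> x"
  proof (cases "x \<in> carrier G")
    case False
    then show ?thesis
      using g by (simp add: carrier_A_vanishes zero_A)
  next
    case True
    have "(\<Sum>j\<le>p. ?t j) = (\<Sum>j\<in>{0, p}. ?t j)"
      using of_nat_choose_prime_eq_0[OF prime_p char_p]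
      by (intro sum.mono_neutral_right) auto
    also have "\<dots> = 0"
      using p_gt_1 g exponent_p neg_one_pow_prime[OF prime_p char_p] by simp
    finally show ?thesis
      using g True by (simp add: aug_gen_pow_apply zero_A)
  qed
qed

lemma aug_ideal_subset_maximalideal:
  assumes M: "maximalideal M A"
  shows "aug_ideal \<subseteq> M"
proof (rule aug_ideal_subsetI)
  have I: "ideal M A"
    using M by (rule maximalideal.axioms(1))
  then show "M \<subseteq> carrier A" "\<zero>\<^bsub>A\<^esub> \<in> M"
    "\<And>u v. u \<in> M \<Longrightarrow> v \<in> M \<Longrightarrow> u \<oplus>\<^bsub>A\<^esub> v \<in> M" "\<And>c u. u \<in> M \<Longrightarrow> scalar c \<otimes>\<^bsub>A\<^esub> u \<in> M"
    by (auto simp: ideal.Icarr additive_subgroup.zero_closed additive_subgroup.a_closed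
        ideal.axioms(1) ideal.I_l_closed)
  fix g
  assume g: "g \<in> carrier G"
  have "aug_gen g [^]\<^bsub>A\<^esub> p \<in> M"
    using aug_gen_pow_p[OF g] I by (simp add: additive_subgroup.zero_closed ideal.axioms(1))
  then show "aug_gen g \<in> M"
    using A.primeideal_pow_imp_mem[OF A.maximalideal_prime[OF M]] g by simp
qed

lemma jacobson_radical_eq_aug_ideal: "jacobson_radical A = aug_ideal"
  unfolding jacobson_radical_def using aug_ideal_maximal aug_ideal_subset_maximalideal by blast

end

section \<open>Monomials and the powers of the radical\<close>

locale elementary_abelian_group_algebra = char_p_group_algebra G A p
  for G :: "('g, 'c) monoid_scheme" (structure) and A :: "('g \<Rightarrow> 'k::field) ring" and p +
  fixes m :: nat and basis :: "nat \<Rightarrow> 'g"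
  assumes basis_in_carrier: "\<forall>i. basis i \<in> carrier G"
    and basis_bij: "bij_betw (lin_comb basis m) (coeff_vectors m) (carrier G)"
begin

text \<open>The variables \<open>x\<^sub>i = 1 - basis i\<close> of the truncated polynomial ring
  \<open>\<bbbF>\<^sub>p[x\<^sub>0, \<dots>, x\<^sub>m\<^sub>-\<^sub>1] / (x\<^sub>i\<^sup>p)\<close> that the group algebra is.\<close>

definition var :: "nat \<Rightarrow> 'g \<Rightarrow> 'k" where
  "var i = aug_gen (basis i)"

definition monomial :: "nat \<Rightarrow> (nat \<Rightarrow> nat) \<Rightarrow> 'g \<Rightarrow> 'k" where
  "monomial k e = (\<Otimes>\<^bsub>A\<^esub>i\<in>{..<k}. var i [^]\<^bsub>A\<^esub> e i)"

abbreviation mon :: "(nat \<Rightarrow> nat) \<Rightarrow> 'g \<Rightarrow> 'k" where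
  "mon \<equiv> monomial m"

definition total_degree :: "(nat \<Rightarrow> nat) \<Rightarrow> nat" where
  "total_degree e = (\<Sum>i<m. e i)"

definition top_degree :: nat where
  "top_degree = m * (p - 1)"

abbreviation Jpow :: "nat \<Rightarrow> ('g \<Rightarrow> 'k) set" where
  "Jpow k \<equiv> ideal_pow A aug_ideal k"

lemma basis_closed [simp]: "basis i \<in> carrier G"
  using basis_in_carrier by blast

lemma var_closed [simp]: "var i \<in> carrier A"
  by (simp add: var_def)

lemma monomial_closed [simp]: "monomial k e \<in> carrier A"
  by (simp add: monomial_def)

lemma monomial_Suc: "monomial (Suc k) e = var k [^]\<^bsub>A\<^esub> e k \<otimes>\<^bsub>A\<^esub> monomial k e"
  unfolding monomial_def lessThan_Suc by (rule A.finprod_insert) auto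

lemma mon_add: "mon (\<lambda>i. e i + f i) = mon e \<otimes>\<^bsub>A\<^esub> mon f"
  by (simp add: monomial_def A.nat_pow_mult[symmetric] Pi_def)

lemma mon_zero: "mon (\<lambda>_. 0) = \<one>\<^bsub>A\<^esub>"
  by (simp add: monomial_def)

lemma total_degree_add: "total_degree (\<lambda>i. e i + f i) = total_degree e + total_degree f"
  by (simp add: total_degree_def sum.distrib)

lemma mon_split:
  assumes "i < m"
  shows "mon e = var i [^]\<^bsub>A\<^esub> e i \<otimes>\<^bsub>A\<^esub> (\<Otimes>\<^bsub>A\<^esub>j\<in>{..<m} - {i}. var j [^]\<^bsub>A\<^esub> e j)"
proof -
  have "{..<m} = insert i ({..<m} - {i})"
    using assms by auto
  then show ?thesis
    unfolding monomial_def by (subst (1) \<open>{..<m} = _\<close>, subst A.finprod_insert) auto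
qed

lemma mon_eq_zero:
  assumes i: "i < m" and e: "p \<le> e i"
  shows "mon e = \<zero>\<^bsub>A\<^esub>"
proof -
  have "var i [^]\<^bsub>A\<^esub> e i = var i [^]\<^bsub>A\<^esub> p \<otimes>\<^bsub>A\<^esub> var i [^]\<^bsub>A\<^esub> (e i - p)"
    using e by (simp add: A.nat_pow_mult)
  then have "var i [^]\<^bsub>A\<^esub> e i = \<zero>\<^bsub>A\<^esub>"
    by (simp add: var_def aug_gen_pow_p)
  then show ?thesis
    by (simp add: mon_split[OF i])
qed

lemma mon_unit:
  assumes i: "i < m"
  shows "mon (\<lambda>j. if j = i then 1 else 0) = var i"
    and "total_degree (\<lambda>j. if j = i then 1 else 0) = 1"
proof -
  have "(\<Otimes>\<^bsub>A\<^esub>j\<in>{..<m} - {i}. var j [^]\<^bsub>A\<^esub> (if j = i then 1 else 0 :: nat)) = \<one>\<^bsub>A\<^esub>"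
    by (rule A.finprod_one_eqI) auto
  then show "mon (\<lambda>j. if j = i then 1 else 0) = var i"
    by (simp add: mon_split[OF i])
  show "total_degree (\<lambda>j. if j = i then 1 else 0) = 1"
    using i by (simp add: total_degree_def)
qed

lemma Jpow_ideal: "ideal (Jpow k) A"
  by (rule A.ideal_pow_ideal[OF aug_ideal_ideal])

lemma Jpow_closed: "u \<in> Jpow k \<Longrightarrow> u \<in> carrier A"
  using ideal.Icarr[OF Jpow_ideal] .

lemma Jpow_mult: "u \<in> Jpow a \<Longrightarrow> v \<in> Jpow b \<Longrightarrow> u \<otimes>\<^bsub>A\<^esub> v \<in> Jpow (a + b)"
  by (rule A.ideal_pow_mult[OF aug_ideal_ideal])

lemma Jpow_one: "Jpow 1 = aug_ideal"
  by (rule A.ideal_pow_one[OF aug_ideal_ideal])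

lemma monomial_in_Jpow: "monomial k e \<in> Jpow (\<Sum>i<k. e i)"
proof (induction k)
  case 0
  then show ?case by (simp add: monomial_def)
next
  case (Suc k)
  have "var k [^]\<^bsub>A\<^esub> (n::nat) \<in> Jpow n" for n
  proof (induction n)
    case (Suc n)
    then show ?case
      using Jpow_mult[OF Suc, of "var k" 1] Jpow_one by (simp add: var_def aug_gen_in_aug_ideal)
  qed simp
  then show ?case
    using Jpow_mult[OF _ Suc.IH] by (simp add: monomial_Suc add.commute)
qed

lemma mon_in_Jpow: "mon e \<in> Jpow (total_degree e)"
  unfolding total_degree_def by (rule monomial_in_Jpow)

text \<open>The span of the monomials of total degree at least \<open>k\<close>, with coefficients in the group
  algebra itself (which costs nothing, as it contains \<open>J\<^sup>k\<close>).\<close>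

inductive_set mon_span :: "nat \<Rightarrow> ('g \<Rightarrow> 'k) set" for k :: nat where
  zero: "\<zero>\<^bsub>A\<^esub> \<in> mon_span k"
| mon: "c \<in> carrier A \<Longrightarrow> k \<le> total_degree e \<Longrightarrow> c \<otimes>\<^bsub>A\<^esub> mon e \<in> mon_span k"
| add: "u \<in> mon_span k \<Longrightarrow> v \<in> mon_span k \<Longrightarrow> u \<oplus>\<^bsub>A\<^esub> v \<in> mon_span k"

lemma mon_span_closed: "u \<in> mon_span k \<Longrightarrow> u \<in> carrier A"
  by (induction rule: mon_span.induct) auto

lemma mon_span_l_mult: "u \<in> mon_span k \<Longrightarrow> c \<in> carrier A \<Longrightarrow> c \<otimes>\<^bsub>A\<^esub> u \<in> mon_span k"
proof (induction rule: mon_span.induct)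
  case (mon c' e)
  then show ?case
    using mon_span.mon[of "c \<otimes>\<^bsub>A\<^esub> c'" k e] by (simp add: A.m_assoc)
next
  case (add u v)
  then show ?case
    using mon_span_closed by (simp add: A.r_distr mon_span.add)
qed (simp add: mon_span.zero)

lemma mon_span_mult: "u \<in> mon_span a \<Longrightarrow> v \<in> mon_span b \<Longrightarrow> u \<otimes>\<^bsub>A\<^esub> v \<in> mon_span (a + b)"
proof (induction u rule: mon_span.induct)
  case (mon c e)
  from mon.prems show ?case
  proof (induction v rule: mon_span.induct)
    case (mon c' f)
    have "(c \<otimes>\<^bsub>A\<^esub> mon e) \<otimes>\<^bsub>A\<^esub> (c' \<otimes>\<^bsub>A\<^esub> mon f) = (c \<otimes>\<^bsub>A\<^esub> c') \<otimes>\<^bsub>A\<^esub> mon (\<lambda>i. e i + f i)"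
      using mon.hyps \<open>c \<in> carrier A\<close> by (simp add: mon_add A.m_ac)
    moreover have "a + b \<le> total_degree (\<lambda>i. e i + f i)"
      using mon.hyps \<open>a \<le> total_degree e\<close> by (simp add: total_degree_add)
    ultimately show ?case
      using mon.hyps \<open>c \<in> carrier A\<close> by (simp add: mon_span.mon)
  next
    case (add u v)
    then show ?case
      using mon_span_closed \<open>c \<in> carrier A\<close> by (simp add: A.r_distr mon_span.add)
  qed (use \<open>c \<in> carrier A\<close> in \<open>simp add: mon_span.zero\<close>)
next
  case (add u1 u2)
  then show ?case
    using mon_span_closed by (simp add: A.l_distr mon_span.add)
qed (use mon_span_closed in \<open>simp add: mon_span.zero\<close>)

text \<open>Since \<open>1 - g h = (1 - g) + g (1 - h)\<close>, every \<open>1 - g\<close> is a combination of the variables.\<close>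
lemma aug_gen_in_mon_span: "g \<in> carrier G \<Longrightarrow> aug_gen g \<in> mon_span 1"
proof -
  define K where "K = {h \<in> carrier G. aug_gen h \<in> mon_span 1}"
  have K_mult: "h \<otimes> h' \<in> K" if "h \<in> K" "h' \<in> K" for h h'
    using that aug_gen_mult mon_span_l_mult by (auto simp: K_def intro!: mon_span.add)
  have K_pow: "h [^] (n::nat) \<in> K" if "h \<in> K" for h n
  proof (induction n)
    case 0
    then show ?case
      by (simp add: K_def aug_gen_one mon_span.zero)
  next
    case (Suc n)
    then show ?case
      using K_mult[OF Suc that] by simp
  qed
  have "var i \<in> mon_span 1" if "i < m" for i
    using mon_span.mon[of "\<one>\<^bsub>A\<^esub>" 1 "\<lambda>j. if j = i then 1 else 0"] mon_unit[OF that] by simp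
  then have K_basis: "basis i \<in> K" if "i < m" for i
    using that by (simp add: K_def var_def)
  have "lin_comb basis k a \<in> K" if "k \<le> m" for k a
    using that
  proof (induction k)
    case 0
    then show ?case
      using lin_comb_zero[of basis 0] by (simp add: K_def lin_comb_def aug_gen_one mon_span.zero)
  next
    case (Suc k)
    then show ?case
      using K_mult K_pow K_basis by (simp add: lin_comb_Suc basis_in_carrier)
  qed
  moreover assume "g \<in> carrier G"
  then have "g \<in> lin_comb basis m ` coeff_vectors m"
    using basis_bij by (simp add: bij_betw_def)
  ultimately show ?thesis
    by (auto simp: K_def)
qed

lemma Jpow_subset_mon_span: "Jpow k \<subseteq> mon_span k"
proof (induction k)
  case 0
  have "c \<in> mon_span 0" if "c \<in> carrier A" for c
    using mon_span.mon[OF that, where e = "\<lambda>_. 0"] that by (simp add: mon_zero)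
  then show ?case by auto
next
  case (Suc k)
  have J1: "aug_ideal \<subseteq> mon_span 1"
  proof (rule aug_ideal_subsetI)
    show "\<And>g. g \<in> carrier G \<Longrightarrow> aug_gen g \<in> mon_span 1"
      by (rule aug_gen_in_mon_span)
  qed (auto simp: mon_span_closed mon_span.zero mon_span.add mon_span_l_mult)
  show ?case
  proof
    fix u
    assume "u \<in> Jpow (Suc k)"
    then have "u \<in> ideal_prod A aug_ideal (Jpow k)" by simp
    then show "u \<in> mon_span (Suc k)"
    proof (induction u rule: ideal_prod.induct)
      case (prod i j)
      then show ?case
        using mon_span_mult[of i 1 j k] J1 Suc by auto
    next
      case (sum s1 s2)
      then show ?case by (simp add: mon_span.add)
    qed
  qed
qed

lemma mon_span_above_top_degree: "u \<in> mon_span k \<Longrightarrow> top_degree < k \<Longrightarrow> u = \<zero>\<^bsub>A\<^esub>"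
proof (induction rule: mon_span.induct)
  case (mon c e)
  have "\<exists>i<m. p \<le> e i"
  proof (rule ccontr)
    assume "\<not> (\<exists>i<m. p \<le> e i)"
    then have "total_degree e \<le> top_degree"
      unfolding total_degree_def top_degree_def using sum_bounded_above[of "{..<m}" e "p - 1"] by force
    then show False
      using mon by simp
  qed
  then show ?case
    using mon mon_eq_zero by auto
qed simp_all

lemma Jpow_above_top_degree: "u \<in> Jpow k \<Longrightarrow> top_degree < k \<Longrightarrow> u = \<zero>\<^bsub>A\<^esub>"
  using Jpow_subset_mon_span mon_span_above_top_degree by blast

lemma Jpow_mult_eq_zero:
  "u \<in> Jpow a \<Longrightarrow> v \<in> Jpow b \<Longrightarrow> top_degree < a + b \<Longrightarrow> u \<otimes>\<^bsub>A\<^esub> v = \<zero>\<^bsub>A\<^esub>"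
  using Jpow_mult Jpow_above_top_degree by blast


section \<open>The socle\<close>

lemma power_sum_mult:
  assumes h: "h \<in> carrier G" and F: "F \<in> carrier A"
  shows "power_sum h \<otimes>\<^bsub>A\<^esub> F = (\<lambda>x. if x \<in> carrier G then (\<Sum>j<p. F (inv (h [^] j) \<otimes> x)) else 0)"
proof
  fix x
  show "(power_sum h \<otimes>\<^bsub>A\<^esub> F) x = (if x \<in> carrier G then (\<Sum>j<p. F (inv (h [^] j) \<otimes> x)) else 0)"
  proof (cases "x \<in> carrier G")
    case True
    have "(power_sum h \<otimes>\<^bsub>A\<^esub> F) x
        = (\<Sum>g\<in>carrier G. \<Sum>j<p. if g = h [^] j then F (inv g \<otimes> x) else 0)"
      using True by (simp add: mult_A power_sum_def sum_distrib_right if_distrib[of "\<lambda>y. y * _"]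
          cong: if_cong)
    also have "\<dots> = (\<Sum>j<p. F (inv (h [^] j) \<otimes> x))"
      using h by (subst sum.swap) (simp add: finite_carrier)
    finally show ?thesis
      using True by simp
  qed (simp add: mult_A)
qed

text \<open>\<open>rep_count k x\<close> counts the representations of \<open>x\<close> as a combination of the first \<open>k\<close> basis
  elements; for \<open>k = m\<close> it is the indicator of \<open>G\<close>.\<close>

definition rep_count :: "nat \<Rightarrow> 'g \<Rightarrow> 'k" where
  "rep_count k = (\<lambda>x. if x \<in> carrier G
     then (\<Sum>a\<in>coeff_vectors k. if lin_comb basis k a = x then 1 else 0) else 0)"

lemma rep_count_closed [simp]: "rep_count k \<in> carrier A"
  by (simp add: rep_count_def carrier_A)

lemma rep_count_0: "rep_count 0 = \<one>\<^bsub>A\<^esub>"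
  by (rule ext) (auto simp: rep_count_def coeff_vectors_def lin_comb_def one_A)

lemma rep_count_Suc: "rep_count (Suc k) = power_sum (basis k) \<otimes>\<^bsub>A\<^esub> rep_count k"
proof
  fix x
  show "rep_count (Suc k) x = (power_sum (basis k) \<otimes>\<^bsub>A\<^esub> rep_count k) x"
  proof (cases "x \<in> carrier G")
    case x: True
    have shift: "(lin_comb basis (Suc k) (a(k := j)) = x)
               = (lin_comb basis k a = inv (basis k [^] j) \<otimes> x)" for a and j :: nat
    proof -
      have "lin_comb basis (Suc k) (a(k := j)) = basis k [^] j \<otimes> lin_comb basis k a"
        unfolding lin_comb_Suc[OF basis_in_carrier] using lin_comb_cong[OF basis_in_carrier, of k basis "a(k := j)" a] by simp
      then show ?thesis
        using G.inv_solve_left[OF lin_comb_closed[OF basis_in_carrier] G.nat_pow_closed[OF basis_closed] x]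
        by auto
    qed
    have "rep_count (Suc k) x
        = (\<Sum>j<p. \<Sum>a\<in>coeff_vectors k. if lin_comb basis k a = inv (basis k [^] j) \<otimes> x then 1 else 0)"
      using x by (simp only: rep_count_def if_True sum_coeff_vectors_Suc shift)
    also have "\<dots> = (\<Sum>j<p. rep_count k (inv (basis k [^] j) \<otimes> x))"
      using x by (simp add: rep_count_def)
    also have "\<dots> = (power_sum (basis k) \<otimes>\<^bsub>A\<^esub> rep_count k) x"
      using x by (simp add: power_sum_mult[OF basis_closed rep_count_closed])
    finally show ?thesis .
  qed (simp add: rep_count_def mult_A)
qed

lemma mon_top: "mon (\<lambda>_. p - 1) = norm_elem"
proof -
  have "monomial k (\<lambda>_. p - 1) = rep_count k" for k
  proof (induction k)
    case 0
    then show ?case by (simp add: monomial_def rep_count_0)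
  next
    case (Suc k)
    then show ?case
      by (simp add: monomial_Suc rep_count_Suc var_def aug_gen_pow_pred_p[simplified])
  qed
  moreover have "rep_count m = norm_elem"
  proof
    fix x
    have "(\<Sum>a\<in>coeff_vectors m. if lin_comb basis m a = x then 1 else 0)
        = (\<Sum>g\<in>carrier G. if g = x then 1 else (0 :: 'k))"
      using basis_bij by (rule sum.reindex_bij_betw)
    then show "rep_count m x = norm_elem x"
      by (simp add: rep_count_def norm_elem_def finite_carrier)
  qed
  ultimately show ?thesis by simp
qed

lemma total_degree_top: "total_degree (\<lambda>_. p - 1) = top_degree"
  by (simp add: total_degree_def top_degree_def)

lemma norm_elem_in_Jpow_top_degree: "norm_elem \<in> Jpow top_degree"
  using mon_in_Jpow[of "\<lambda>_. p - 1"] unfolding mon_top total_degree_top .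

lemma Jpow_top_degree_eq: "Jpow top_degree = {(\<lambda>g. if g \<in> carrier G then c else 0) | c. True}"
proof
  show "Jpow top_degree \<subseteq> {(\<lambda>g. if g \<in> carrier G then c else 0) | c. True}"
  proof
    fix u
    assume u: "u \<in> Jpow top_degree"
    have "aug_gen g \<otimes>\<^bsub>A\<^esub> u = \<zero>\<^bsub>A\<^esub>" if "g \<in> carrier G" for g
      using Jpow_mult_eq_zero[of "aug_gen g" 1 u] u that Jpow_one aug_gen_in_aug_ideal by simp
    then have "u = scalar (u \<one>) \<otimes>\<^bsub>A\<^esub> norm_elem"
      using aug_annihilated_eq_scalar Jpow_closed[OF u] by blast
    then show "u \<in> {(\<lambda>g. if g \<in> carrier G then c else 0) | c. True}"
      by (auto simp: scalar_mult_norm_elem)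
  qed
  show "{(\<lambda>g. if g \<in> carrier G then c else 0) | c. True} \<subseteq> Jpow top_degree"
    using norm_elem_in_Jpow_top_degree ideal.I_l_closed[OF Jpow_ideal]
    by (auto simp: scalar_mult_norm_elem[symmetric])
qed

lemma Jpow_top_degree_principal: "principalideal (Jpow top_degree) A"
proof (rule principalidealI[OF Jpow_ideal])
  have "Jpow top_degree = PIdl\<^bsub>A\<^esub> norm_elem"
  proof (intro equalityI subsetI)
    fix u
    assume "u \<in> Jpow top_degree"
    then obtain c where "u = scalar c \<otimes>\<^bsub>A\<^esub> norm_elem"
      by (auto simp: Jpow_top_degree_eq scalar_mult_norm_elem)
    then show "u \<in> PIdl\<^bsub>A\<^esub> norm_elem"
      unfolding cgenideal_def using scalar_closed by blast
  next
    fix u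
    assume "u \<in> PIdl\<^bsub>A\<^esub> norm_elem"
    then obtain a where "u = a \<otimes>\<^bsub>A\<^esub> norm_elem"
      by (auto simp: cgenideal_def)
    then show "u \<in> Jpow top_degree"
      by (auto simp: Jpow_top_degree_eq mult_norm_elem[of a] scalar_mult_norm_elem)
  qed
  then show "\<exists>i\<in>carrier A. Jpow top_degree = Idl\<^bsub>A\<^esub> {i}"
    using A.cgenideal_eq_genideal norm_elem_closed by blast
qed


section \<open>Non-principal and non-checkable powers\<close>

lemma mon_mult_complement:
  assumes "\<forall>i. e i \<le> p - 1"
  shows "mon e \<otimes>\<^bsub>A\<^esub> mon (\<lambda>i. p - 1 - e i) = norm_elem"
    and "total_degree (\<lambda>i. p - 1 - e i) = top_degree - total_degree e"
proof -
  have sum: "(\<lambda>i. e i + (p - 1 - e i)) = (\<lambda>_. p - 1)"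
    using assms by (intro ext) (metis le_add_diff_inverse)
  then show "mon e \<otimes>\<^bsub>A\<^esub> mon (\<lambda>i. p - 1 - e i) = norm_elem"
    by (simp only: mon_add[symmetric] mon_top)
  have "total_degree e + total_degree (\<lambda>i. p - 1 - e i) = top_degree"
    using sum by (simp only: total_degree_add[symmetric] total_degree_top)
  then show "total_degree (\<lambda>i. p - 1 - e i) = top_degree - total_degree e"
    by simp
qed

lemma mon_mult_eq_zero: "i < m \<Longrightarrow> p \<le> e i + f i \<Longrightarrow> mon e \<otimes>\<^bsub>A\<^esub> mon f = \<zero>\<^bsub>A\<^esub>"
  using mon_add[of e f] mon_eq_zero[of i "\<lambda>i. e i + f i"] by simp

lemma exists_exponents_below_corner:
  assumes m: "2 \<le> m" and r: "r < top_degree"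
  shows "\<exists>e. (\<forall>i. e i \<le> p - 1) \<and> e 0 \<le> p - 2 \<and> e 1 \<le> p - 2 \<and> total_degree e = r - 1"
proof -
  define bound where "bound i = (if i < 2 then p - 2 else p - 1)" for i :: nat
  have "(\<Sum>i<k. bound i) = k * (p - 1) - 2" if "2 \<le> k" for k
    using that
  proof (induction k rule: dec_induct)
    case base
    then show ?case
      using p_gt_1 by (simp add: bound_def numeral_2_eq_2)
  next
    case (step k)
    have "2 * 1 \<le> k * (p - 1)"
      using mult_le_mono[of 2 k 1 "p - 1"] step p_gt_1 by simp
    then show ?case
      using step p_gt_1 by (simp add: bound_def)
  qed
  then have "r - 1 \<le> (\<Sum>i<m. bound i)"
    using m r by (simp add: top_degree_def)
  then obtain e where e: "\<forall>i. e i \<le> bound i" "(\<Sum>i<m. e i) = r - 1"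
    using exists_bounded_summands by blast
  moreover have "bound i \<le> p - 1" for i
    by (auto simp: bound_def intro: diff_le_mono2)
  ultimately have "\<forall>i. e i \<le> p - 1"
    using le_trans by blast
  moreover have "e 0 \<le> p - 2" "e 1 \<le> p - 2"
    using e(1)[rule_format, of 0] e(1)[rule_format, of 1] by (simp_all add: bound_def)
  ultimately show ?thesis
    using e(2) by (auto simp: total_degree_def)
qed

text \<open>With \<open>n\<close> a monomial of degree \<open>r - 1\<close> in which \<open>x\<^sub>0\<close> and \<open>x\<^sub>1\<close> have exponent below \<open>p - 1\<close>,
  take \<open>a = x\<^sub>0 n\<close>, \<open>b = x\<^sub>1 n\<close> and their complements \<open>a'\<close>, \<open>b'\<close> in the top monomial.\<close>
lemma exists_monomial_pairs:
  assumes m: "2 \<le> m" and r: "0 < r" "r < top_degree"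
  shows "\<exists>a b a' b'. a \<in> Jpow r \<and> b \<in> Jpow r \<and> a' \<in> Jpow (top_degree - r) \<and> b' \<in> Jpow (top_degree - r)
     \<and> a \<otimes>\<^bsub>A\<^esub> a' = norm_elem \<and> b \<otimes>\<^bsub>A\<^esub> b' = norm_elem
     \<and> a \<otimes>\<^bsub>A\<^esub> b' = \<zero>\<^bsub>A\<^esub> \<and> b \<otimes>\<^bsub>A\<^esub> a' = \<zero>\<^bsub>A\<^esub>"
proof -
  obtain e where e: "\<forall>i. e i \<le> p - 1" "e 0 \<le> p - 2" "e 1 \<le> p - 2" "total_degree e = r - 1"
    using exists_exponents_below_corner[OF m r(2)] by blast
  define ea where "ea = (\<lambda>i. e i + (if i = 0 then 1 else 0))"
  define eb where "eb = (\<lambda>i. e i + (if i = 1 then 1 else 0))"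
  have "total_degree ea = r" "total_degree eb = r"
    unfolding ea_def eb_def total_degree_add
    using e(4) r m mon_unit(2)[of 0] mon_unit(2)[of 1] by simp_all
  moreover have "\<forall>i. ea i \<le> p - 1" "\<forall>i. eb i \<le> p - 1"
    using e p_gt_1 by (auto simp: ea_def eb_def)
  ultimately have ea: "\<forall>i. ea i \<le> p - 1" "total_degree ea = r"
    and eb: "\<forall>i. eb i \<le> p - 1" "total_degree eb = r"
    by simp_all
  have "mon ea \<otimes>\<^bsub>A\<^esub> mon (\<lambda>i. p - 1 - eb i) = \<zero>\<^bsub>A\<^esub>"
    using m e(2) p_gt_1 by (intro mon_mult_eq_zero[of 0]) (simp_all add: ea_def eb_def)
  moreover have "mon eb \<otimes>\<^bsub>A\<^esub> mon (\<lambda>i. p - 1 - ea i) = \<zero>\<^bsub>A\<^esub>"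
    using m e(3) p_gt_1 by (intro mon_mult_eq_zero[of 1]) (simp_all add: ea_def eb_def)
  moreover have "mon ea \<in> Jpow r" "mon eb \<in> Jpow r"
    using mon_in_Jpow[of ea] mon_in_Jpow[of eb] unfolding ea(2) eb(2) .
  moreover have "mon (\<lambda>i. p - 1 - ea i) \<in> Jpow (top_degree - r)"
    "mon (\<lambda>i. p - 1 - eb i) \<in> Jpow (top_degree - r)"
    using mon_in_Jpow[of "\<lambda>i. p - 1 - ea i"] mon_in_Jpow[of "\<lambda>i. p - 1 - eb i"]
    unfolding mon_mult_complement(2)[OF ea(1)] mon_mult_complement(2)[OF eb(1)] ea(2) eb(2) .
  ultimately show ?thesis
    using mon_mult_complement(1)[OF ea(1)] mon_mult_complement(1)[OF eb(1)] by blast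
qed

text \<open>Modulo \<open>J\<close>, every element is its augmentation, and \<open>J\<close> kills \<open>J\<^sup>r J\<^sup>N\<^sup>-\<^sup>r\<close>.\<close>
lemma mult_Jpow_complement:
  assumes u: "u \<in> carrier A" and v: "v \<in> Jpow r" and d: "d \<in> Jpow (top_degree - r)"
    and r: "r \<le> top_degree"
  shows "(u \<otimes>\<^bsub>A\<^esub> v) \<otimes>\<^bsub>A\<^esub> d = scalar (augmentation u) \<otimes>\<^bsub>A\<^esub> (v \<otimes>\<^bsub>A\<^esub> d)"
proof -
  define u' where "u' = u \<ominus>\<^bsub>A\<^esub> scalar (augmentation u)"
  have u': "u' \<in> Jpow 1"
    using u unfolding Jpow_one by (simp add: u'_def aug_ideal_def augmentation_minus)
  have vd: "v \<in> carrier A" "d \<in> carrier A"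
    using v d by (simp_all add: Jpow_closed)
  have u'_closed: "u' \<in> carrier A"
    using u by (simp add: u'_def)
  have "(u \<otimes>\<^bsub>A\<^esub> v) \<otimes>\<^bsub>A\<^esub> d = (scalar (augmentation u) \<oplus>\<^bsub>A\<^esub> u') \<otimes>\<^bsub>A\<^esub> (v \<otimes>\<^bsub>A\<^esub> d)"
    using u vd by (simp add: u'_def a_minus_def A.a_ac A.r_neg A.m_assoc)
  also have "\<dots> = scalar (augmentation u) \<otimes>\<^bsub>A\<^esub> (v \<otimes>\<^bsub>A\<^esub> d) \<oplus>\<^bsub>A\<^esub> u' \<otimes>\<^bsub>A\<^esub> (v \<otimes>\<^bsub>A\<^esub> d)"
    using u'_closed vd by (simp add: A.l_distr)
  also have "u' \<otimes>\<^bsub>A\<^esub> (v \<otimes>\<^bsub>A\<^esub> d) = \<zero>\<^bsub>A\<^esub>"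
    using Jpow_mult_eq_zero[OF u' Jpow_mult[OF v d]] r by simp
  finally show ?thesis
    using vd by simp
qed

lemma Jpow_not_principal:
  assumes m: "2 \<le> m" and r: "0 < r" "r < top_degree"
  shows "\<not> principalideal (Jpow r) A"
proof
  assume "principalideal (Jpow r) A"
  then obtain v where v: "v \<in> carrier A" "Jpow r = PIdl\<^bsub>A\<^esub> v"
    using A.cgenideal_eq_genideal by (auto simp: principalideal_def principalideal_axioms_def)
  then have vJ: "v \<in> Jpow r"
    using A.cgenideal_self by blast
  obtain a b a' b' where ab: "a \<in> Jpow r" "b \<in> Jpow r" "a' \<in> Jpow (top_degree - r)"
    "b' \<in> Jpow (top_degree - r)" "a \<otimes>\<^bsub>A\<^esub> a' = norm_elem" "b \<otimes>\<^bsub>A\<^esub> b' = norm_elem"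
    "a \<otimes>\<^bsub>A\<^esub> b' = \<zero>\<^bsub>A\<^esub>" "b \<otimes>\<^bsub>A\<^esub> a' = \<zero>\<^bsub>A\<^esub>"
    using exists_monomial_pairs[OF m r] by blast
  obtain u u' where u: "u \<in> carrier A" "a = u \<otimes>\<^bsub>A\<^esub> v" and u': "u' \<in> carrier A" "b = u' \<otimes>\<^bsub>A\<^esub> v"
    using ab(1,2) v by (auto simp: cgenideal_def)
  have at_one: "(scalar (augmentation w) \<otimes>\<^bsub>A\<^esub> (v \<otimes>\<^bsub>A\<^esub> d)) \<one> = augmentation w * (v \<otimes>\<^bsub>A\<^esub> d) \<one>"
    if "d \<in> Jpow (top_degree - r)" for w d
    using that v Jpow_closed by (simp add: scalar_mult)
  have "augmentation u * (v \<otimes>\<^bsub>A\<^esub> a') \<one> = norm_elem \<one>"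
    using mult_Jpow_complement[OF u(1) vJ ab(3)] at_one[OF ab(3), of u] ab(5) u(2) r by simp
  moreover have "augmentation u' * (v \<otimes>\<^bsub>A\<^esub> a') \<one> = \<zero>\<^bsub>A\<^esub> \<one>"
    using mult_Jpow_complement[OF u'(1) vJ ab(3)] at_one[OF ab(3), of u'] ab(8) u'(2) r by simp
  moreover have "augmentation u' * (v \<otimes>\<^bsub>A\<^esub> b') \<one> = norm_elem \<one>"
    using mult_Jpow_complement[OF u'(1) vJ ab(4)] at_one[OF ab(4), of u'] ab(6) u'(2) r by simp
  ultimately show False
    by (auto simp: norm_elem_def zero_A)
qed

lemma checkable_Jpow_0: "checkable (Jpow 0) A"
  unfolding checkable_def by (intro bexI[of _ "\<zero>\<^bsub>A\<^esub>"]) auto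

lemma checkable_Jpow_1: "checkable (Jpow 1) A"
  unfolding checkable_def Jpow_one using aug_ideal_eq_annihilator norm_elem_closed by blast

lemma annihilator_mult_Jpow_pred:
  assumes v: "v \<in> carrier A" and ann: "\<And>z. z \<in> Jpow i \<Longrightarrow> v \<otimes>\<^bsub>A\<^esub> z = \<zero>\<^bsub>A\<^esub>"
    and i: "1 \<le> i" and q: "q \<in> Jpow (i - 1)"
  shows "v \<otimes>\<^bsub>A\<^esub> q = scalar ((v \<otimes>\<^bsub>A\<^esub> q) \<one>) \<otimes>\<^bsub>A\<^esub> norm_elem"
proof (rule aug_annihilated_eq_scalar)
  show "v \<otimes>\<^bsub>A\<^esub> q \<in> carrier A"
    using v q Jpow_closed by simp
  fix g
  assume g: "g \<in> carrier G"
  have "aug_gen g \<otimes>\<^bsub>A\<^esub> q \<in> Jpow (1 + (i - 1))"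
    using Jpow_mult[of "aug_gen g" 1 q] q g Jpow_one aug_gen_in_aug_ideal by simp
  then have "v \<otimes>\<^bsub>A\<^esub> (aug_gen g \<otimes>\<^bsub>A\<^esub> q) = \<zero>\<^bsub>A\<^esub>"
    using ann i by simp
  then show "aug_gen g \<otimes>\<^bsub>A\<^esub> (v \<otimes>\<^bsub>A\<^esub> q) = \<zero>\<^bsub>A\<^esub>"
    using v g q Jpow_closed by (simp add: A.m_lcomm)
qed

lemma Jpow_not_checkable:
  assumes m: "2 \<le> m" and i: "2 \<le> i" "i \<le> top_degree"
  shows "\<not> checkable (Jpow i) A"
proof
  assume "checkable (Jpow i) A"
  then obtain v where v: "v \<in> carrier A" and Jv: "Jpow i = {z \<in> carrier A. v \<otimes>\<^bsub>A\<^esub> z = \<zero>\<^bsub>A\<^esub>}"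
    by (auto simp: checkable_def)
  define r where "r = top_degree + 1 - i"
  have r: "0 < r" "r < top_degree" "top_degree - r = i - 1"
    using i by (auto simp: r_def)
  obtain a b a' b' where ab: "a \<in> Jpow r" "b \<in> Jpow r" "a' \<in> Jpow (i - 1)" "b' \<in> Jpow (i - 1)"
    "a' \<otimes>\<^bsub>A\<^esub> a = norm_elem" "b' \<otimes>\<^bsub>A\<^esub> b = norm_elem" "b' \<otimes>\<^bsub>A\<^esub> a = \<zero>\<^bsub>A\<^esub>" "a' \<otimes>\<^bsub>A\<^esub> b = \<zero>\<^bsub>A\<^esub>"
    using exists_monomial_pairs[OF m r(1,2)] Jpow_closed A.m_comm unfolding r(3) by metis
  have closed: "a \<in> carrier A" "b \<in> carrier A" "a' \<in> carrier A" "b' \<in> carrier A"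
    using ab(1-4) Jpow_closed by auto
  have kill: "z \<otimes>\<^bsub>A\<^esub> q = \<zero>\<^bsub>A\<^esub>" if "z \<in> Jpow i" "q \<in> Jpow r" for z q
    using Jpow_mult_eq_zero[OF that] i by (simp add: r_def)
  have ann: "v \<otimes>\<^bsub>A\<^esub> z = \<zero>\<^bsub>A\<^esub>" if "z \<in> Jpow i" for z
    using that Jv by blast
  define \<alpha> where "\<alpha> = (v \<otimes>\<^bsub>A\<^esub> a') \<one>"
  define \<beta> where "\<beta> = (v \<otimes>\<^bsub>A\<^esub> b') \<one>"
  have va: "v \<otimes>\<^bsub>A\<^esub> a' = scalar \<alpha> \<otimes>\<^bsub>A\<^esub> norm_elem"
    unfolding \<alpha>_def using annihilator_mult_Jpow_pred[OF v ann _ ab(3)] i by simp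
  have vb: "v \<otimes>\<^bsub>A\<^esub> b' = scalar \<beta> \<otimes>\<^bsub>A\<^esub> norm_elem"
    unfolding \<beta>_def using annihilator_mult_Jpow_pred[OF v ann _ ab(4)] i by simp
  text \<open>\<open>w\<close> is annihilated by \<open>v\<close>, hence lies in \<open>J\<^sup>i\<close> and kills \<open>a\<close> and \<open>b\<close>, which forces
    \<open>\<alpha> = \<beta> = 0\<close>.\<close>
  define w where "w = scalar \<beta> \<otimes>\<^bsub>A\<^esub> a' \<ominus>\<^bsub>A\<^esub> scalar \<alpha> \<otimes>\<^bsub>A\<^esub> b'"
  have "v \<otimes>\<^bsub>A\<^esub> w = scalar \<beta> \<otimes>\<^bsub>A\<^esub> (v \<otimes>\<^bsub>A\<^esub> a') \<ominus>\<^bsub>A\<^esub> scalar \<alpha> \<otimes>\<^bsub>A\<^esub> (v \<otimes>\<^bsub>A\<^esub> b')"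
    using v closed by (simp add: w_def a_minus_def A.r_distr A.r_minus A.m_lcomm)
  also have "\<dots> = \<zero>\<^bsub>A\<^esub>"
    unfolding va vb using A.m_lcomm[of "scalar \<beta>" "scalar \<alpha>" norm_elem] by (simp add: A.r_neg)
  finally have w: "w \<in> Jpow i"
    using closed Jv by (simp add: w_def)
  have "w \<otimes>\<^bsub>A\<^esub> a = scalar \<beta> \<otimes>\<^bsub>A\<^esub> norm_elem"
    using closed ab(5,7) by (simp add: w_def a_minus_def A.l_distr A.l_minus A.m_assoc)
  then have "\<beta> = 0"
    using kill[OF w ab(1)] scalar_mult_norm_elem_eq_zero_iff by metis
  have "w \<otimes>\<^bsub>A\<^esub> b = \<ominus>\<^bsub>A\<^esub> (scalar \<alpha> \<otimes>\<^bsub>A\<^esub> norm_elem)"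
    using closed ab(6,8) by (simp add: w_def a_minus_def A.l_distr A.l_minus A.m_assoc)
  then have "scalar \<alpha> \<otimes>\<^bsub>A\<^esub> norm_elem = \<zero>\<^bsub>A\<^esub>"
    using kill[OF w ab(2)] A.minus_minus[of "scalar \<alpha> \<otimes>\<^bsub>A\<^esub> norm_elem"] by (metis A.minus_zero A.m_closed scalar_closed norm_elem_closed)
  then have "\<alpha> = 0"
    by (simp add: scalar_mult_norm_elem_eq_zero_iff)
  then have "a' \<in> Jpow i"
    using va closed Jv scalar_mult_norm_elem_eq_zero_iff by simp
  then have "norm_elem = \<zero>\<^bsub>A\<^esub>"
    using kill[OF _ ab(1)] ab(5) by simp
  then show False
    using scalar_mult_norm_elem_eq_zero_iff[of 1] by (simp add: scalar_mult)
qed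


lemma checkable_Jpow_iff:
  assumes m: "2 \<le> m" and i: "i \<le> top_degree"
  shows "checkable (Jpow i) A \<longleftrightarrow> i \<in> {0, 1}"
proof (cases "i < 2")
  case True
  then have "i = 0 \<or> i = 1"
    by auto
  then show ?thesis
    using checkable_Jpow_0 checkable_Jpow_1 by auto
next
  case False
  then show ?thesis
    using Jpow_not_checkable[OF m _ i] by auto
qed

end

theorem mainTheorem4:
  fixes G :: "('g, 'c) monoid_scheme" (structure)
    and p m :: nat
  assumes "Factorial_Ring.prime p" and "m \<ge> 2"
    and "comm_group G" and "finite (carrier G)" and "card (carrier G) = p ^ m"
    and "\<forall>x\<in>carrier G. x [^] p = \<one>"
    and "card (UNIV :: 'k set) = p"
  defines "A \<equiv> (group_algebra G :: ('g \<Rightarrow> 'k::{field,finite}) ring)"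
    and "J \<equiv> jacobson_radical (group_algebra G :: ('g \<Rightarrow> 'k) ring)"
    and "N \<equiv> m * (p - 1)"
  shows "(\<forall>r. 0 < r \<and> r < N \<longrightarrow> \<not> principalideal (ideal_pow A J r) A)
       \<and> ideal_pow A J N = {(\<lambda>g. if g \<in> carrier G then c else 0) | c :: 'k. True}
       \<and> principalideal (ideal_pow A J N) A
       \<and> (\<forall>i \<le> N. checkable (ideal_pow A J i) A \<longleftrightarrow> i \<in> {0, 1})"
proof -
  interpret elementary_abelian_group G p
    by (intro elementary_abelian_group.intro elementary_abelian_group_axioms.intro) (use assms in auto)
  obtain basis where basis: "\<forall>i. basis i \<in> carrier G"
    "bij_betw (lin_comb basis m) (coeff_vectors m) (carrier G)"
    using exists_basis assms(4,5) by blast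
  interpret M: elementary_abelian_group_algebra G A p m basis
    by (intro elementary_abelian_group_algebra.intro elementary_abelian_group_algebra_axioms.intro
        char_p_group_algebra.intro char_p_group_algebra_axioms.intro fin_group_algebra.intro
        fin_group_algebra_axioms.intro elementary_abelian_group_axioms)
      (use assms basis of_nat_card_UNIV_eq_0[where 'a = 'k] in auto)
  have J: "J = M.aug_ideal" and N: "N = M.top_degree"
    using M.jacobson_radical_eq_aug_ideal by (simp_all add: J_def A_def N_def M.top_degree_def)
  show ?thesis
    unfolding J N
    using M.Jpow_not_principal[OF assms(2)] M.Jpow_top_degree_eq M.Jpow_top_degree_principal
      M.checkable_Jpow_iff[OF assms(2)] by auto
qed

end
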